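(* For $n = 2^i$ with $i \ge 1$, there exists a solution to the $(n-2)$-out-of-$n$ picture-hanging puzzle on the nails $\{1,\dots,n\}$ whose length is exactly \[ 6n\log_2(n/2) = 6n(\log_2 n - 1). \]
   Context: Words are elements of the free group $F(V)$ on $V=\{1,\dots,n\}$, written additively ($+$ group operation, $-$ inverse, $0$ identity, the empty word). Length is the number of letters of the freely reduced word. For $S \subseteq V$, $w|_S$ is the image of $w$ under the homomorphism killing the generators in $S$ ("removing the nails in $S$"). For $0 \le k \le n$, a solution to the $k$-out-of-$n$ picture-hanging puzzle is a word $w$ such that for every $S \subseteq V$: $w|_S = 0 \iff |S| \ge k$ (the picture falls exactly when at least $k$ nails are removed). For $n=2$, $k=0$ and the solution is the empty word. *)

theory Defs
  imports Complex_Main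
begin

text \<open>A letter (x, True) is the generator x, (x, False) its inverse.
  The group element represented by a list is given by its free reduction.\<close>

type_synonym letter = "nat \<times> bool"
type_synonym word = "letter list"

fun fred :: "word \<Rightarrow> word" where
  "fred [] = []"
| "fred (a # w) = (case fred w of
      [] \<Rightarrow> [a]
    | b # u \<Rightarrow> (if fst a = fst b \<and> snd a \<noteq> snd b then u else a # b # u))"

definition freely_reduced :: "word \<Rightarrow> bool" where
  "freely_reduced w \<longleftrightarrow> fred w = w"

definition remove_nails :: "nat set \<Rightarrow> word \<Rightarrow> word" where
  "remove_nails S w = fred (filter (\<lambda>l. fst l \<notin> S) w)"

definition puzzle_solution :: "nat \<Rightarrow> nat \<Rightarrow> word \<Rightarrow> bool" where
  "puzzle_solution n k w \<longleftrightarrow>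
     (\<forall>l \<in> set w. fst l \<in> {1..n}) \<and>
     (\<forall>S. S \<subseteq> {1..n} \<longrightarrow> (remove_nails S w = [] \<longleftrightarrow> card S \<ge> k))"

end

theory Submission
  imports Defs
begin

text \<open>
  Split the nails into two halves \<open>A\<close> and \<open>B\<close>, and let \<open>R\<^sub>A\<close>, \<open>R\<^sub>B\<close> be
  recursively constructed words on them that fall exactly when at most two of their nails remain.
  Write \<open>P\<^sub>X\<close> for the product of the generators of \<open>X\<close> and \<open>Q\<^sub>X\<close> for \<open>P\<^sub>X\<close> followed by
  the inverses of the same generators: \<open>P\<^sub>X\<close> falls when no nail of \<open>X\<close> remains, \<open>Q\<^sub>X\<close> when at
  most one does. The word \<open>R\<^sub>A R\<^sub>B [Q\<^sub>A, P\<^sub>B] [P\<^sub>A, Q\<^sub>B]\<close> falls whenever at most two nails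
  remain, because a commutator falls as soon as one of its arguments does. Since restricting to
  fewer nails commutes with free reduction, for the converse it suffices to keep exactly three
  nails: if they lie in one half, only one recursive word survives; if they split 2 + 1 or
  1 + 2, exactly one of the two commutators survives, and it is a nonempty reduced word.
  Adjacent letters of the word always belong to different nails, so it is freely reduced, and its
  length satisfies \<open>L(2h) = 2 L(h) + 12 h\<close>.
\<close>

section \<open>Free reduction\<close>

definition cancels :: "letter \<Rightarrow> letter \<Rightarrow> bool" where
  "cancels a b \<longleftrightarrow> fst a = fst b \<and> snd a \<noteq> snd b"

fun cancel_cons :: "letter \<Rightarrow> word \<Rightarrow> word" where
  "cancel_cons a [] = [a]"
| "cancel_cons a (b # w) = (if cancels a b then w else a # b # w)"

lemma fred_Cons: "fred (a # w) = cancel_cons a (fred w)"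
  by (cases "fred w") (auto simp: cancels_def)

declare fred.simps(2) [simp del]

definition reduced :: "word \<Rightarrow> bool" where
  "reduced w \<longleftrightarrow> successively (\<lambda>a b. \<not> cancels a b) w"

lemma reduced_cancel_cons: "reduced w \<Longrightarrow> reduced (cancel_cons a w)"
  by (cases w) (auto simp: reduced_def successively_Cons)

lemma reduced_fred: "reduced (fred w)"
  by (induction w) (simp_all add: reduced_def fred_Cons reduced_cancel_cons[unfolded reduced_def])

lemma cancel_cons_cancel_cons:
  assumes "reduced w" and "cancels a b"
  shows "cancel_cons a (cancel_cons b w) = w"
proof (cases w)
  case (Cons c w')
  show ?thesis
  proof (cases "cancels b c")
    case True
    with assms(2) have "a = c" by (cases a; cases c) (auto simp: cancels_def)
    with True Cons assms(1) show ?thesis by (cases w') (auto simp: reduced_def)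
  qed (use Cons assms(2) in auto)
qed (use assms in auto)

lemma fred_reduced: "reduced w \<Longrightarrow> fred w = w"
proof (induction w)
  case (Cons a w)
  then have "reduced w" by (auto simp: reduced_def successively_Cons)
  with Cons show ?case by (cases w) (auto simp: fred_Cons reduced_def)
qed simp

lemma fred_fred [simp]: "fred (fred w) = fred w"
  by (simp add: fred_reduced reduced_fred)

lemma fred_append_fred_right: "fred (u @ fred v) = fred (u @ v)"
  by (induction u) (simp_all add: fred_Cons)

lemma fred_append_fred_left: "fred (fred u @ v) = fred (u @ v)"
proof (induction u)
  case (Cons a u)
  have "fred (cancel_cons a x @ v) = cancel_cons a (fred (x @ v))" if "reduced x" for x
    using that by (cases x) (auto simp: fred_Cons cancel_cons_cancel_cons reduced_fred)
  with Cons show ?case by (simp add: fred_Cons reduced_fred)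
qed simp

lemma fred_append_trivial: "fred v = [] \<Longrightarrow> fred (u @ v @ w) = fred (u @ w)"
  by (metis append_Nil fred_append_fred_left fred_append_fred_right)

lemma fred_append_trivial_left: "fred u = [] \<Longrightarrow> fred (u @ v) = fred v"
  using fred_append_trivial[of u "[]"] by simp

lemma fred_append_trivial_right: "fred v = [] \<Longrightarrow> fred (u @ v) = fred u"
  using fred_append_trivial[of v u "[]"] by simp

lemma reduced_append:
  "reduced u \<Longrightarrow> reduced v \<Longrightarrow> (u \<noteq> [] \<Longrightarrow> v \<noteq> [] \<Longrightarrow> fst (last u) \<noteq> fst (hd v))
    \<Longrightarrow> reduced (u @ v)"
  by (auto simp: reduced_def successively_append_iff cancels_def)

abbreviation nails :: "word \<Rightarrow> nat set" where
  "nails w \<equiv> fst ` set w"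

definition inv_word :: "word \<Rightarrow> word" where
  "inv_word w = rev (map (apsnd Not) w)"

lemma inv_word_simps [simp]:
  "inv_word [] = []"
  "inv_word (a # w) = inv_word w @ [apsnd Not a]"
  "inv_word (u @ v) = inv_word v @ inv_word u"
  "inv_word w = [] \<longleftrightarrow> w = []"
  "length (inv_word w) = length w"
  "nails (inv_word w) = nails w"
  by (auto simp: inv_word_def image_image)

lemma fred_append_inv_word: "fred (w @ inv_word w) = []"
proof (induction w)
  case (Cons a w)
  have "fred ((a # w) @ inv_word (a # w)) = cancel_cons a (fred (fred (w @ inv_word w) @ [apsnd Not a]))"
    by (simp add: fred_Cons fred_append_fred_left)
  also have "\<dots> = []" using Cons by (simp add: fred_Cons cancels_def)
  finally show ?case .
qed simp

lemma inv_word_inv_word [simp]: "inv_word (inv_word w) = w"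
  by (induction w) auto

lemma fred_inv_word_append: "fred (inv_word w @ w) = []"
  using fred_append_inv_word[of "inv_word w"] by simp

lemma fred_inv_word_trivial: "fred w = [] \<Longrightarrow> fred (inv_word w) = []"
  using fred_append_trivial[of w "inv_word w" "[]"] fred_inv_word_append[of w] by simp

lemma reduced_inv_word: "reduced w \<Longrightarrow> reduced (inv_word w)"
  by (auto simp: reduced_def inv_word_def successively_map cancels_def
      elim!: successively_mono)

definition commutator :: "word \<Rightarrow> word \<Rightarrow> word" where
  "commutator u v = u @ v @ inv_word u @ inv_word v"

lemma length_commutator: "length (commutator u v) = 2 * (length u + length v)"
  by (simp add: commutator_def)

lemma commutator_eq_Nil_iff [simp]: "commutator u v = [] \<longleftrightarrow> u = [] \<and> v = []"
  by (auto simp: commutator_def)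

lemma fred_commutator_trivial_left: "fred u = [] \<Longrightarrow> fred (commutator u v) = []"
  using fred_append_trivial[of u "[]"] fred_append_trivial[of "inv_word u" v]
  by (simp add: commutator_def fred_inv_word_trivial fred_append_inv_word)

lemma fred_commutator_trivial_right: "fred v = [] \<Longrightarrow> fred (commutator u v) = []"
  using fred_append_trivial[of v u "inv_word u @ inv_word v"]
    fred_append_trivial[of "inv_word v" "u @ inv_word u" "[]"]
  by (simp add: commutator_def fred_inv_word_trivial fred_append_inv_word)

lemma reduced_commutator:
  assumes "reduced u" "reduced v" "u \<noteq> []" "v \<noteq> []" "nails u \<inter> nails v = {}"
  shows "reduced (commutator u v)"
proof -
  have hd_last: "fst (last x) \<noteq> fst (hd y)"
    if "x \<noteq> []" "y \<noteq> []" "nails x \<inter> nails y = {}" for x y :: word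
  proof -
    have "fst (last x) \<in> nails x" "fst (hd y) \<in> nails y" using that(1,2) by simp_all
    with that(3) show ?thesis by (simp only: disjoint_iff) metis
  qed
  have "reduced (inv_word u @ inv_word v)"
    by (rule reduced_append) (use assms hd_last[of "inv_word u" "inv_word v"] in
        \<open>simp_all add: reduced_inv_word\<close>)
  then have "reduced (v @ inv_word u @ inv_word v)"
    by (rule reduced_append[OF \<open>reduced v\<close>])
      (use assms hd_last[of v "inv_word u"] in \<open>simp_all add: inf_commute\<close>)
  then show ?thesis
    unfolding commutator_def
    by (rule reduced_append[OF \<open>reduced u\<close>]) (use assms hd_last[of u v] in simp_all)
qed

lemma fred_commutator_neq_Nil:
  "reduced u \<Longrightarrow> reduced v \<Longrightarrow> u \<noteq> [] \<Longrightarrow> v \<noteq> [] \<Longrightarrow> nails u \<inter> nails v = {}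
    \<Longrightarrow> fred (commutator u v) \<noteq> []"
  by (simp add: fred_reduced reduced_commutator)

lemma nails_commutator [simp]: "nails (commutator u v) = nails u \<union> nails v"
  unfolding commutator_def set_append image_Un inv_word_simps by blast

lemma hd_commutator: "u \<noteq> [] \<Longrightarrow> hd (commutator u v) = hd u"
  by (simp add: commutator_def)

lemma fst_last_commutator: "v \<noteq> [] \<Longrightarrow> fst (last (commutator u v)) = fst (hd v)"
  by (cases v) (simp_all add: commutator_def)

section \<open>Deleting nails\<close>

definition keep_nails :: "nat set \<Rightarrow> word \<Rightarrow> word" where
  "keep_nails K w = filter (\<lambda>l. fst l \<in> K) w"

lemma remove_nails_eq_keep_nails: "remove_nails S w = fred (keep_nails (- S) w)"
  by (simp add: remove_nails_def keep_nails_def)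

lemma keep_nails_Nil [simp]: "keep_nails K [] = []"
  and keep_nails_append [simp]: "keep_nails K (u @ v) = keep_nails K u @ keep_nails K v"
  by (simp_all add: keep_nails_def)

lemma keep_nails_inv_word [simp]: "keep_nails K (inv_word w) = inv_word (keep_nails K w)"
  by (induction w) (simp_all add: keep_nails_def)

lemma keep_nails_commutator [simp]:
  "keep_nails K (commutator u v) = commutator (keep_nails K u) (keep_nails K v)"
  by (simp add: commutator_def)

lemma keep_nails_keep_nails: "keep_nails K (keep_nails L w) = keep_nails (K \<inter> L) w"
  by (auto simp: keep_nails_def intro: filter_cong)

lemma keep_nails_disjoint: "nails w \<inter> K = {} \<Longrightarrow> keep_nails K w = []"
  by (force simp: keep_nails_def filter_empty_conv)

lemma fred_keep_nails_cancel_cons: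
  assumes "reduced w"
  shows "fred (keep_nails K (cancel_cons a w)) = fred (keep_nails K (a # w))"
proof (cases w)
  case (Cons b w')
  show ?thesis
  proof (cases "cancels a b")
    case True
    then have "fst a = fst b" by (simp add: cancels_def)
    with True Cons show ?thesis
      using cancel_cons_cancel_cons[OF reduced_fred, of a b] by (auto simp: keep_nails_def fred_Cons)
  qed (use Cons in auto)
qed simp

lemma fred_keep_nails_fred: "fred (keep_nails K (fred w)) = fred (keep_nails K w)"
proof (induction w)
  case (Cons a w)
  have "fred (keep_nails K (fred (a # w))) = fred (keep_nails K (a # fred w))"
    by (simp add: fred_Cons fred_keep_nails_cancel_cons reduced_fred)
  also have "\<dots> = fred (keep_nails K (a # w))"
    using Cons by (simp add: keep_nails_def fred_Cons)
  finally show ?case .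
qed (simp add: keep_nails_def)

section \<open>The recursive construction\<close>

lemma length_filter_mem: "distinct xs \<Longrightarrow> length (filter (\<lambda>x. x \<in> K) xs) = card (K \<inter> set xs)"
  by (simp add: distinct_length_filter Int_commute)

lemma card_Int_set_append:
  "distinct (ys @ zs) \<Longrightarrow> card (K \<inter> set (ys @ zs)) = card (K \<inter> set ys) + card (K \<inter> set zs)"
  by (simp add: Int_Un_distrib card_Un_disjoint disjoint_iff)

lemma halving_induct [case_names short halves]:
  assumes "\<And>xs. length xs \<le> 2 \<Longrightarrow> P xs"
    and "\<And>ys zs. length ys \<le> length zs \<Longrightarrow> length zs \<le> Suc (length ys) \<Longrightarrow>
      2 < length (ys @ zs) \<Longrightarrow> P ys \<Longrightarrow> P zs \<Longrightarrow> P (ys @ zs)"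
  shows "P xs"
proof (induction xs rule: length_induct)
  case (1 xs)
  show ?case
  proof (cases "length xs \<le> 2")
    case False
    then show ?thesis
      using assms(2)[of "take (length xs div 2) xs" "drop (length xs div 2) xs"] 1 by simp
  qed (rule assms(1))
qed

lemma halves_of_power_of_two:
  assumes "length ys \<le> length zs" "length zs \<le> Suc (length ys)" "2 < length (ys @ zs)"
    and "length (ys @ zs) = 2 ^ j"
  obtains i where "j = Suc (Suc i)" "length ys = 2 ^ Suc i" "length zs = 2 ^ Suc i"
proof -
  have "(2::nat) ^ 1 < 2 ^ j" using assms(3,4) by simp
  then have "1 < j" using power_strict_increasing_iff[of "2::nat" 1 j] by simp
  define i where "i = j - 2"
  with \<open>1 < j\<close> have j: "j = Suc (Suc i)" by simp
  moreover have "length ys = 2 ^ Suc i" "length zs = 2 ^ Suc i"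
    using assms(1,2,4) unfolding j by simp_all
  ultimately show ?thesis by (rule that)
qed

definition pos_word :: "nat list \<Rightarrow> word" where
  "pos_word xs = map (\<lambda>x. (x, True)) xs"

definition pos_neg_word :: "nat list \<Rightarrow> word" where
  "pos_neg_word xs = pos_word xs @ map (\<lambda>x. (x, False)) xs"

lemma pos_word_simps [simp]:
  "pos_word [] = []"
  "pos_word xs = [] \<longleftrightarrow> xs = []"
  "length (pos_word xs) = length xs"
  "nails (pos_word xs) = set xs"
  "xs \<noteq> [] \<Longrightarrow> fst (hd (pos_word xs)) = hd xs"
  by (simp_all add: pos_word_def image_image hd_map)

lemma pos_neg_word_simps [simp]:
  "pos_neg_word [] = []"
  "pos_neg_word xs = [] \<longleftrightarrow> xs = []"
  "length (pos_neg_word xs) = 2 * length xs"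
  "nails (pos_neg_word xs) = set xs"
  "xs \<noteq> [] \<Longrightarrow> fst (hd (pos_neg_word xs)) = hd xs"
  by (simp_all add: pos_neg_word_def image_Un image_image)

lemma keep_nails_pos_word: "keep_nails K (pos_word xs) = pos_word (filter (\<lambda>x. x \<in> K) xs)"
  by (simp add: keep_nails_def pos_word_def filter_map comp_def)

lemma keep_nails_pos_neg_word:
  "keep_nails K (pos_neg_word xs) = pos_neg_word (filter (\<lambda>x. x \<in> K) xs)"
  by (simp add: keep_nails_def pos_neg_word_def pos_word_def filter_map comp_def)

lemma reduced_map_sign: "reduced (map (\<lambda>x. (x, b)) xs)"
  by (induction xs rule: induct_list012) (simp_all add: reduced_def cancels_def)

lemma reduced_pos_word: "reduced (pos_word xs)"
  by (simp add: pos_word_def reduced_map_sign)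

lemma reduced_pos_neg_word:
  assumes "distinct xs" "length xs \<noteq> 1"
  shows "reduced (pos_neg_word xs)"
proof (cases xs)
  case (Cons x xs')
  with assms have "xs' \<noteq> []" by auto
  with Cons assms have "last xs' \<noteq> x" using last_in_set by fastforce
  with Cons \<open>xs' \<noteq> []\<close> show ?thesis
    unfolding pos_neg_word_def
    by (intro reduced_append reduced_pos_word reduced_map_sign) (simp add: pos_word_def last_map)
qed (simp add: reduced_def pos_neg_word_def pos_word_def)

lemma fred_pos_neg_word: "length xs \<le> 1 \<Longrightarrow> fred (pos_neg_word xs) = []"
  by (cases xs) (auto simp: pos_neg_word_def pos_word_def fred_Cons cancels_def)

lemma fred_keep_nails_pos_neg_word:
  "distinct xs \<Longrightarrow> card (K \<inter> set xs) \<le> 1 \<Longrightarrow> fred (keep_nails K (pos_neg_word xs)) = []"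
  by (simp add: keep_nails_pos_neg_word fred_pos_neg_word length_filter_mem)

lemma fred_commutator_pos_words_neq_Nil:
  assumes "distinct xs" "length xs \<ge> 2" "ys \<noteq> []" "set xs \<inter> set ys = {}"
  shows "fred (commutator (pos_neg_word xs) (pos_word ys)) \<noteq> []"
    and "fred (commutator (pos_word ys) (pos_neg_word xs)) \<noteq> []"
proof -
  have "xs \<noteq> []" "reduced (pos_neg_word xs)"
    using assms(1,2) by (auto intro: reduced_pos_neg_word)
  with assms(3,4) show "fred (commutator (pos_neg_word xs) (pos_word ys)) \<noteq> []"
    and "fred (commutator (pos_word ys) (pos_neg_word xs)) \<noteq> []"
    by (simp_all add: fred_commutator_neq_Nil reduced_pos_word Int_commute)
qed

lemma reduced_commutators_pos_words:
  assumes "set ys \<inter> set zs = {}" "distinct ys" "distinct zs" "2 \<le> length ys" "2 \<le> length zs"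
  shows "reduced (commutator (pos_neg_word ys) (pos_word zs)
    @ commutator (pos_word ys) (pos_neg_word zs))"
proof (rule reduced_append)
  have "ys \<noteq> []" "zs \<noteq> []" using assms(4,5) by auto
  with assms show "reduced (commutator (pos_neg_word ys) (pos_word zs))"
    and "reduced (commutator (pos_word ys) (pos_neg_word zs))"
    by (simp_all add: reduced_commutator reduced_pos_word reduced_pos_neg_word)
  from \<open>ys \<noteq> []\<close> \<open>zs \<noteq> []\<close> assms(1) have "hd zs \<noteq> hd ys" by (metis disjoint_iff hd_in_set)
  with \<open>ys \<noteq> []\<close> \<open>zs \<noteq> []\<close>
  show "fst (last (commutator (pos_neg_word ys) (pos_word zs)))
      \<noteq> fst (hd (commutator (pos_word ys) (pos_neg_word zs)))"
    by (simp add: fst_last_commutator hd_commutator)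
qed

function hang :: "nat list \<Rightarrow> word" where
  "hang xs = (if length xs \<le> 2 then [] else
     (let ys = take (length xs div 2) xs; zs = drop (length xs div 2) xs in
      hang ys @ hang zs @ commutator (pos_neg_word ys) (pos_word zs)
        @ commutator (pos_word ys) (pos_neg_word zs)))"
  by pat_completeness auto
termination by (relation "measure length") auto

declare hang.simps [simp del]

lemma hang_short: "length xs \<le> 2 \<Longrightarrow> hang xs = []"
  by (simp add: hang.simps)

lemma hang_append:
  assumes "length ys \<le> length zs" "length zs \<le> Suc (length ys)" "2 < length (ys @ zs)"
  shows "hang (ys @ zs) = hang ys @ hang zs @ commutator (pos_neg_word ys) (pos_word zs)
    @ commutator (pos_word ys) (pos_neg_word zs)"
proof -
  have "length (ys @ zs) div 2 = length ys" using assms(1,2) by simp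
  with assms(3) show ?thesis by (subst hang.simps) (simp add: Let_def)
qed

lemma nails_hang: "nails (hang xs) \<subseteq> set xs"
proof (induction xs rule: halving_induct)
  case (halves ys zs)
  then show ?case by (simp add: hang_append image_Un) blast
qed (simp add: hang_short)

lemma fst_hd_last_hang:
  assumes "hang xs \<noteq> []"
  shows "fst (hd (hang xs)) \<in> set xs" and "fst (last (hang xs)) \<in> set xs"
  using assms nails_hang[of xs] by (meson hd_in_set last_in_set image_eqI subsetD)+

lemma hang_eq_Nil_iff: "hang xs = [] \<longleftrightarrow> length xs \<le> 2"
proof (induction xs rule: halving_induct)
  case (halves ys zs)
  then have "zs \<noteq> []" by auto
  with halves.hyps show ?case by (simp add: hang_append commutator_def)
qed (simp add: hang_short)

lemma length_hang: "length xs = 2 ^ j \<Longrightarrow> length (hang xs) = 6 * 2 ^ j * (j - 1)"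
proof (induction xs arbitrary: j rule: halving_induct)
  case (short xs)
  then have "(2::nat) ^ j \<le> 2 ^ 1" by simp
  then have "j \<le> 1" by (simp only: power_increasing_iff)
  with short show ?case by (simp add: hang_short)
next
  case (halves ys zs)
  then obtain i where j: "j = Suc (Suc i)" and ys: "length ys = 2 ^ Suc i"
    and zs: "length zs = 2 ^ Suc i"
    by (elim halves_of_power_of_two)
  have "length (hang (ys @ zs)) = 2 * (6 * 2 ^ Suc i * i) + 12 * 2 ^ Suc i"
    using halves.IH(1)[OF ys] halves.IH(2)[OF zs] halves.hyps ys zs
    by (simp add: hang_append length_commutator)
  then show ?case by (simp add: j algebra_simps)
qed

lemma reduced_hang: "distinct xs \<Longrightarrow> length xs = 2 ^ j \<Longrightarrow> reduced (hang xs)"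
proof (induction xs arbitrary: j rule: halving_induct)
  case (short xs)
  then show ?case by (simp add: hang_short reduced_def)
next
  case (halves ys zs)
  then obtain i where ys: "length ys = 2 ^ Suc i" and zs: "length zs = 2 ^ Suc i"
    by (elim halves_of_power_of_two)
  then have "2 \<le> length ys" "2 \<le> length zs" by simp_all
  then have "ys \<noteq> []" by auto
  have disj: "set ys \<inter> set zs = {}" and "distinct ys" "distinct zs" using halves.prems(1) by auto
  then have "hd ys \<notin> set zs"
    using \<open>ys \<noteq> []\<close> by (metis disjoint_iff hd_in_set)
  let ?c1 = "commutator (pos_neg_word ys) (pos_word zs)"
  let ?c2 = "commutator (pos_word ys) (pos_neg_word zs)"
  have c12: "reduced (?c1 @ ?c2)"
    using disj \<open>distinct ys\<close> \<open>distinct zs\<close> \<open>2 \<le> length ys\<close> \<open>2 \<le> length zs\<close>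
    by (rule reduced_commutators_pos_words)
  have hd_c1: "fst (hd (?c1 @ ?c2)) = hd ys"
    using \<open>ys \<noteq> []\<close> by (simp add: hd_commutator)
  have IH_zs: "reduced (hang zs)" and IH_ys: "reduced (hang ys)"
    using halves.IH ys zs \<open>distinct ys\<close> \<open>distinct zs\<close> by blast+
  have zs_c12: "reduced (hang zs @ ?c1 @ ?c2)"
  proof (rule reduced_append[OF IH_zs c12])
    assume "hang zs \<noteq> []"
    then have "fst (last (hang zs)) \<in> set zs" by (rule fst_hd_last_hang)
    with \<open>hd ys \<notin> set zs\<close> hd_c1 show "fst (last (hang zs)) \<noteq> fst (hd (?c1 @ ?c2))" by auto
  qed
  have "reduced (hang ys @ hang zs @ ?c1 @ ?c2)"
  proof (rule reduced_append[OF IH_ys zs_c12])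
    assume "hang ys \<noteq> []"
    then have "hang zs \<noteq> []" using ys zs by (simp add: hang_eq_Nil_iff)
    then have "fst (hd (hang zs @ ?c1 @ ?c2)) \<in> set zs" by (simp add: fst_hd_last_hang)
    moreover have "fst (last (hang ys)) \<in> set ys"
      using \<open>hang ys \<noteq> []\<close> by (rule fst_hd_last_hang)
    ultimately show "fst (last (hang ys)) \<noteq> fst (hd (hang zs @ ?c1 @ ?c2))" using disj by auto
  qed
  with halves.hyps show ?case by (simp add: hang_append)
qed

lemma hang_falls:
  "distinct xs \<Longrightarrow> card (K \<inter> set xs) \<le> 2 \<Longrightarrow> fred (keep_nails K (hang xs)) = []"
proof (induction xs rule: halving_induct)
  case (short xs)
  then show ?case by (simp add: hang_short)
next
  case (halves ys zs)
  have "distinct ys" "distinct zs" using halves.prems(1) by simp_all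
  have card: "card (K \<inter> set ys) + card (K \<inter> set zs) \<le> 2"
    using halves.prems(2) unfolding card_Int_set_append[OF halves.prems(1)] .
  have pos_word_falls: "fred (keep_nails K (pos_word xs)) = []" if "K \<inter> set xs = {}" for xs
    using that by (simp add: keep_nails_disjoint Int_commute)
  have "fred (keep_nails K (commutator (pos_neg_word ys) (pos_word zs))) = []"
  proof (cases "card (K \<inter> set ys) \<le> 1")
    case True
    with \<open>distinct ys\<close> show ?thesis
      by (simp add: fred_commutator_trivial_left fred_keep_nails_pos_neg_word)
  next
    case False
    with card have "card (K \<inter> set zs) = 0" by linarith
    then show ?thesis by (simp add: fred_commutator_trivial_right pos_word_falls)
  qed
  moreover have "fred (keep_nails K (commutator (pos_word ys) (pos_neg_word zs))) = []"
  proof (cases "card (K \<inter> set ys) = 0")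
    case True
    then show ?thesis by (simp add: fred_commutator_trivial_left pos_word_falls)
  next
    case False
    with card have "card (K \<inter> set zs) \<le> 1" by linarith
    with \<open>distinct zs\<close> show ?thesis
      by (simp add: fred_commutator_trivial_right fred_keep_nails_pos_neg_word)
  qed
  moreover have "fred (keep_nails K (hang ys)) = []" "fred (keep_nails K (hang zs)) = []"
    using halves.IH \<open>distinct ys\<close> \<open>distinct zs\<close> card by simp_all
  ultimately show ?case
    using halves.hyps by (simp add: hang_append fred_append_trivial_left)
qed

lemma fred_keep_nails_hang_append_left:
  assumes "length ys \<le> length zs" "length zs \<le> Suc (length ys)" "2 < length (ys @ zs)"
    and "K \<inter> set zs = {}"
  shows "fred (keep_nails K (hang (ys @ zs))) = fred (keep_nails K (hang ys))"
proof -
  have "keep_nails K (hang zs) = []"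
    using nails_hang[of zs] assms(4) by (intro keep_nails_disjoint) auto
  moreover have "keep_nails K (pos_word zs) = []" "keep_nails K (pos_neg_word zs) = []"
    using assms(4) by (simp_all add: keep_nails_disjoint Int_commute)
  ultimately show ?thesis
    using assms(1-3) by (simp add: hang_append fred_append_trivial_right fred_commutator_trivial_right)
qed

lemma fred_keep_nails_hang_append_right:
  assumes "length ys \<le> length zs" "length zs \<le> Suc (length ys)" "2 < length (ys @ zs)"
    and "K \<inter> set ys = {}"
  shows "fred (keep_nails K (hang (ys @ zs))) = fred (keep_nails K (hang zs))"
proof -
  have "keep_nails K (hang ys) = []"
    using nails_hang[of ys] assms(4) by (intro keep_nails_disjoint) auto
  moreover have "keep_nails K (pos_word ys) = []" "keep_nails K (pos_neg_word ys) = []"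
    using assms(4) by (simp_all add: keep_nails_disjoint Int_commute)
  ultimately show ?thesis
    using assms(1-3) by (simp add: hang_append fred_append_trivial_left fred_append_trivial_right
        fred_commutator_trivial_left)
qed

lemma hang_holds_on_split_nails:
  assumes "length ys \<le> length zs" "length zs \<le> Suc (length ys)" "2 < length (ys @ zs)"
    and "distinct (ys @ zs)" and "card (K \<inter> set ys) + card (K \<inter> set zs) = 3"
    and "K \<inter> set ys \<noteq> {}" "K \<inter> set zs \<noteq> {}"
  shows "fred (keep_nails K (hang (ys @ zs))) \<noteq> []"
proof -
  have "distinct ys" "distinct zs" and disj: "set ys \<inter> set zs = {}" using assms(4) by auto
  let ?fy = "filter (\<lambda>x. x \<in> K) ys" and ?fz = "filter (\<lambda>x. x \<in> K) zs"
  have fy: "length ?fy = card (K \<inter> set ys)" "distinct ?fy" "set ?fy \<subseteq> set ys"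
    and fz: "length ?fz = card (K \<inter> set zs)" "distinct ?fz" "set ?fz \<subseteq> set zs"
    using \<open>distinct ys\<close> \<open>distinct zs\<close> by (auto simp: length_filter_mem)
  have split: "fred (keep_nails K (hang (ys @ zs))) = fred (keep_nails K (hang ys)
      @ keep_nails K (hang zs) @ commutator (pos_neg_word ?fy) (pos_word ?fz)
      @ commutator (pos_word ?fy) (pos_neg_word ?fz))"
    using assms(1-3) by (simp add: hang_append keep_nails_pos_word keep_nails_pos_neg_word)
  have "card (K \<inter> set ys) \<noteq> 0" "card (K \<inter> set zs) \<noteq> 0" using assms(6,7) by simp_all
  with assms(5) consider "card (K \<inter> set ys) = 2" "card (K \<inter> set zs) = 1"
    | "card (K \<inter> set ys) = 1" "card (K \<inter> set zs) = 2"
    by linarith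
  then show ?thesis
  proof cases
    case 1
    then have "fred (keep_nails K (hang ys)) = []" "fred (keep_nails K (hang zs)) = []"
      using \<open>distinct ys\<close> \<open>distinct zs\<close> by (simp_all add: hang_falls)
    moreover have "fred (commutator (pos_word ?fy) (pos_neg_word ?fz)) = []"
      using 1 fz by (simp add: fred_pos_neg_word fred_commutator_trivial_right)
    moreover have "fred (commutator (pos_neg_word ?fy) (pos_word ?fz)) \<noteq> []"
      using 1 fy fz disj by (intro fred_commutator_pos_words_neq_Nil) auto
    ultimately show ?thesis
      using split by (simp add: fred_append_trivial_left fred_append_trivial_right)
  next
    case 2
    then have "fred (keep_nails K (hang ys)) = []" "fred (keep_nails K (hang zs)) = []"
      using \<open>distinct ys\<close> \<open>distinct zs\<close> by (simp_all add: hang_falls)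
    moreover have "fred (commutator (pos_neg_word ?fy) (pos_word ?fz)) = []"
      using 2 fy by (simp add: fred_pos_neg_word fred_commutator_trivial_left)
    moreover have "fred (commutator (pos_word ?fy) (pos_neg_word ?fz)) \<noteq> []"
      using 2 fy fz disj by (intro fred_commutator_pos_words_neq_Nil) auto
    ultimately show ?thesis
      using split by (simp add: fred_append_trivial_left)
  qed
qed

lemma hang_holds_on_three_nails:
  "distinct xs \<Longrightarrow> K \<subseteq> set xs \<Longrightarrow> card K = 3 \<Longrightarrow> fred (keep_nails K (hang xs)) \<noteq> []"
proof (induction xs arbitrary: K rule: halving_induct)
  case (short xs)
  then have "card K \<le> length xs" using card_mono[of "set xs" K] card_length[of xs] by simp
  with short show ?case by simp
next
  case (halves ys zs)
  have "distinct ys" "distinct zs" using halves.prems(1) by auto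
  have "K \<inter> set (ys @ zs) = K" using halves.prems(2) by auto
  then have card: "card (K \<inter> set ys) + card (K \<inter> set zs) = 3"
    using halves.prems(3) card_Int_set_append[OF halves.prems(1), of K] by simp
  consider "K \<inter> set zs = {}" | "K \<inter> set ys = {}" | "K \<inter> set ys \<noteq> {}" "K \<inter> set zs \<noteq> {}"
    by blast
  then show ?case
  proof cases
    case 1
    then have "K \<subseteq> set ys" using halves.prems(2) by auto
    with 1 halves.hyps halves.IH(1)[OF \<open>distinct ys\<close> _ halves.prems(3)] show ?thesis
      by (simp add: fred_keep_nails_hang_append_left)
  next
    case 2
    then have "K \<subseteq> set zs" using halves.prems(2) by auto
    with 2 halves.hyps halves.IH(2)[OF \<open>distinct zs\<close> _ halves.prems(3)] show ?thesis
      by (simp add: fred_keep_nails_hang_append_right)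
  next
    case 3
    with halves.hyps halves.prems(1) card show ?thesis by (rule hang_holds_on_split_nails)
  qed
qed

lemma hang_falls_iff:
  assumes "distinct xs"
  shows "fred (keep_nails K (hang xs)) = [] \<longleftrightarrow> card (K \<inter> set xs) \<le> 2"
proof
  assume falls: "fred (keep_nails K (hang xs)) = []"
  show "card (K \<inter> set xs) \<le> 2"
  proof (rule ccontr)
    assume "\<not> card (K \<inter> set xs) \<le> 2"
    then have "3 \<le> card (K \<inter> set xs)" by simp
    then obtain L where L: "L \<subseteq> K \<inter> set xs" "card L = 3"
      by (rule obtain_subset_with_card_n)
    then have "L \<inter> K = L" by blast
    have "fred (keep_nails L (hang xs)) = fred (keep_nails L (fred (keep_nails K (hang xs))))"
      unfolding fred_keep_nails_fred keep_nails_keep_nails \<open>L \<inter> K = L\<close> ..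
    also have "\<dots> = []" unfolding falls by (simp add: keep_nails_def)
    finally have "fred (keep_nails L (hang xs)) = []" .
    moreover have "fred (keep_nails L (hang xs)) \<noteq> []"
      by (rule hang_holds_on_three_nails[OF assms]) (use L in auto)
    ultimately show False by simp
  qed
qed (rule hang_falls[OF assms])

lemma puzzle_solution_hang:
  assumes "distinct xs" and "set xs = {1..n}"
  shows "puzzle_solution n (n - 2) (hang xs)"
proof -
  have "remove_nails S (hang xs) = [] \<longleftrightarrow> n - 2 \<le> card S" if "S \<subseteq> {1..n}" for S
  proof -
    have "- S \<inter> {1..n} = {1..n} - S" by auto
    with that have "card (- S \<inter> {1..n}) = n - card S"
      by (simp add: card_Diff_subset finite_subset)
    moreover have "remove_nails S (hang xs) = [] \<longleftrightarrow> card (- S \<inter> {1..n}) \<le> 2"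
      unfolding remove_nails_eq_keep_nails hang_falls_iff[OF assms(1)] assms(2) ..
    ultimately show ?thesis by linarith
  qed
  then show ?thesis
    unfolding puzzle_solution_def using nails_hang[of xs] assms(2) by fastforce
qed

theorem theorem4:
  fixes i n :: nat
  assumes "i \<ge> 1" and "n = 2 ^ i"
  shows "\<exists>w. freely_reduced w \<and> puzzle_solution n (n - 2) w \<and>
             real (length w) = 6 * real n * log 2 (real n / 2)"
proof -
  define xs where "xs = [1..<n + 1]"
  have xs: "distinct xs" "set xs = {1..n}" "length xs = 2 ^ i"
    using assms(2) by (auto simp: xs_def)
  have "real n / 2 = 2 ^ (i - 1)"
    using assms by (simp add: power_diff)
  then have "log 2 (real n / 2) = real (i - 1)" by simp
  moreover have "length (hang xs) = 6 * n * (i - 1)"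
    using length_hang[OF xs(3)] assms(2) by simp
  ultimately have "real (length (hang xs)) = 6 * real n * log 2 (real n / 2)"
    by simp
  moreover have "freely_reduced (hang xs)"
    unfolding freely_reduced_def using xs by (intro fred_reduced reduced_hang)
  ultimately show ?thesis
    using puzzle_solution_hang[OF xs(1,2)] by blast
qed

end
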